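(* Let $R$ be a commutative ring with identity, $\mathcal S$ an associative $R$-algebra with identity and $\mathcal M$ a bimodule over $\mathcal S$. For $x\in\mathcal S$ let $T(x)=\{m\in\mathcal M: m(xa-ax)=0\text{ for all } a\in\mathcal S\}$. Then $T(x)$ is a subbimodule of $\mathcal M$. *)

theory Defs
  imports "HOL-Algebra.Module"
begin

definition r_algebra :: "('r, 'x) ring_scheme \<Rightarrow> ('r, 's) module \<Rightarrow> bool" where
  "r_algebra R S \<longleftrightarrow> cring R \<and> ring S \<and> module R S \<and>
     (\<forall>r\<in>carrier R. \<forall>a\<in>carrier S. \<forall>b\<in>carrier S.
        (r \<odot>\<^bsub>S\<^esub> a) \<otimes>\<^bsub>S\<^esub> b = r \<odot>\<^bsub>S\<^esub> (a \<otimes>\<^bsub>S\<^esub> b) \<and>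
        a \<otimes>\<^bsub>S\<^esub> (r \<odot>\<^bsub>S\<^esub> b) = r \<odot>\<^bsub>S\<^esub> (a \<otimes>\<^bsub>S\<^esub> b))"

definition bimodule ::
  "('r, 'x) ring_scheme \<Rightarrow> ('r, 's) module \<Rightarrow> ('r, 'm) module \<Rightarrow>
   ('s \<Rightarrow> 'm \<Rightarrow> 'm) \<Rightarrow> ('m \<Rightarrow> 's \<Rightarrow> 'm) \<Rightarrow> bool" where
  "bimodule R S M lact ract \<longleftrightarrow> module R M \<and>
    (\<forall>s\<in>carrier S. \<forall>m\<in>carrier M. lact s m \<in> carrier M \<and> ract m s \<in> carrier M) \<and>
    (\<forall>s\<in>carrier S. \<forall>t\<in>carrier S. \<forall>m\<in>carrier M.
        lact (s \<oplus>\<^bsub>S\<^esub> t) m = lact s m \<oplus>\<^bsub>M\<^esub> lact t m \<and>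
        ract m (s \<oplus>\<^bsub>S\<^esub> t) = ract m s \<oplus>\<^bsub>M\<^esub> ract m t \<and>
        lact (s \<otimes>\<^bsub>S\<^esub> t) m = lact s (lact t m) \<and>
        ract m (s \<otimes>\<^bsub>S\<^esub> t) = ract (ract m s) t) \<and>
    (\<forall>s\<in>carrier S. \<forall>m\<in>carrier M. \<forall>n\<in>carrier M.
        lact s (m \<oplus>\<^bsub>M\<^esub> n) = lact s m \<oplus>\<^bsub>M\<^esub> lact s n \<and>
        ract (m \<oplus>\<^bsub>M\<^esub> n) s = ract m s \<oplus>\<^bsub>M\<^esub> ract n s) \<and>
    (\<forall>m\<in>carrier M. lact \<one>\<^bsub>S\<^esub> m = m \<and> ract m \<one>\<^bsub>S\<^esub> = m) \<and>
    (\<forall>s\<in>carrier S. \<forall>t\<in>carrier S. \<forall>m\<in>carrier M.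
        ract (lact s m) t = lact s (ract m t)) \<and>
    (\<forall>r\<in>carrier R. \<forall>s\<in>carrier S. \<forall>m\<in>carrier M.
        r \<odot>\<^bsub>M\<^esub> (lact s m) = lact (r \<odot>\<^bsub>S\<^esub> s) m \<and>
        lact (r \<odot>\<^bsub>S\<^esub> s) m = lact s (r \<odot>\<^bsub>M\<^esub> m) \<and>
        r \<odot>\<^bsub>M\<^esub> (ract m s) = ract m (r \<odot>\<^bsub>S\<^esub> s) \<and>
        ract m (r \<odot>\<^bsub>S\<^esub> s) = ract (r \<odot>\<^bsub>M\<^esub> m) s)"

definition subbimodule ::
  "'m set \<Rightarrow> ('r, 'x) ring_scheme \<Rightarrow> ('r, 's) module \<Rightarrow> ('r, 'm) module \<Rightarrow>
   ('s \<Rightarrow> 'm \<Rightarrow> 'm) \<Rightarrow> ('m \<Rightarrow> 's \<Rightarrow> 'm) \<Rightarrow> bool" where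
  "subbimodule N R S M lact ract \<longleftrightarrow> submodule N R M \<and>
    (\<forall>s\<in>carrier S. \<forall>m\<in>N. lact s m \<in> N \<and> ract m s \<in> N)"

definition Tset ::
  "('r, 's) module \<Rightarrow> ('r, 'm) module \<Rightarrow> ('m \<Rightarrow> 's \<Rightarrow> 'm) \<Rightarrow> 's \<Rightarrow> 'm set" where
  "Tset S M ract x = {m \<in> carrier M. \<forall>a\<in>carrier S.
      ract m (x \<otimes>\<^bsub>S\<^esub> a \<ominus>\<^bsub>S\<^esub> a \<otimes>\<^bsub>S\<^esub> x) = \<zero>\<^bsub>M\<^esub>}"

end

theory Submission
  imports Defs "HOL-Algebra.AbelCoset"
begin

text \<open>Only the right action matters for T(x): if m annihilates every commutator [x,a] = xa - ax,
  then so do s m (the two actions commute) and m s, because of the identity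
  s[x,a] = [x,sa] - [x,s]a, which gives (m s)[x,a] = m[x,sa] - (m[x,s])a = 0.\<close>

lemma (in ring) l_mult_commutator:
  assumes "s \<in> carrier R" "x \<in> carrier R" "a \<in> carrier R"
  shows "s \<otimes> (x \<otimes> a \<ominus> a \<otimes> x) = (x \<otimes> (s \<otimes> a) \<ominus> (s \<otimes> a) \<otimes> x) \<ominus> (x \<otimes> s \<ominus> s \<otimes> x) \<otimes> a"
proof -
  have "(x \<otimes> (s \<otimes> a) \<ominus> (s \<otimes> a) \<otimes> x) \<ominus> (x \<otimes> s \<ominus> s \<otimes> x) \<otimes> a
      = (x \<otimes> s \<otimes> a \<ominus> s \<otimes> a \<otimes> x) \<ominus> (x \<otimes> s \<otimes> a \<ominus> s \<otimes> x \<otimes> a)"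
    using assms by (simp add: minus_eq l_distr l_minus m_assoc)
  also have "\<dots> = s \<otimes> x \<otimes> a \<ominus> s \<otimes> a \<otimes> x"
    using assms by (simp add: minus_eq minus_add a_assoc a_comm[of "\<ominus> (s \<otimes> a \<otimes> x)"] r_neg2)
  also have "\<dots> = s \<otimes> (x \<otimes> a \<ominus> a \<otimes> x)"
    using assms by (simp add: minus_eq r_distr r_minus m_assoc)
  finally show ?thesis ..
qed

lemma additive_abelian_group_hom:
  assumes "abelian_group G" "abelian_group H" "h \<in> carrier G \<rightarrow> carrier H"
    and "\<And>x y. x \<in> carrier G \<Longrightarrow> y \<in> carrier G \<Longrightarrow> h (x \<oplus>\<^bsub>G\<^esub> y) = h x \<oplus>\<^bsub>H\<^esub> h y"
  shows "abelian_group_hom G H h"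
proof -
  interpret G: abelian_group G by fact
  interpret H: abelian_group H by fact
  show ?thesis
    using assms(3,4)
    by (intro abelian_group_homI assms(1,2) group_hom.intro group_hom_axioms.intro
        G.a_group H.a_group) (auto simp: hom_def)
qed

locale ring_bimodule =
  fixes R :: "('r, 'x) ring_scheme" and S :: "('r, 's) module" and M :: "('r, 'm) module"
    and lact :: "'s \<Rightarrow> 'm \<Rightarrow> 'm" and ract :: "'m \<Rightarrow> 's \<Rightarrow> 'm"
  assumes ring_S: "ring S"
    and is_bimodule: "bimodule R S M lact ract"

sublocale ring_bimodule \<subseteq> S: ring S
  by (rule ring_S)

sublocale ring_bimodule \<subseteq> M: module R M
  using is_bimodule by (simp add: bimodule_def)

context ring_bimodule
begin

lemma lact_closed: "s \<in> carrier S \<Longrightarrow> m \<in> carrier M \<Longrightarrow> lact s m \<in> carrier M"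
  and ract_closed: "s \<in> carrier S \<Longrightarrow> m \<in> carrier M \<Longrightarrow> ract m s \<in> carrier M"
  using is_bimodule by (simp_all add: bimodule_def)

lemma ract_add_left:
  "s \<in> carrier S \<Longrightarrow> m \<in> carrier M \<Longrightarrow> n \<in> carrier M \<Longrightarrow>
    ract (m \<oplus>\<^bsub>M\<^esub> n) s = ract m s \<oplus>\<^bsub>M\<^esub> ract n s"
  and ract_add_right:
  "s \<in> carrier S \<Longrightarrow> t \<in> carrier S \<Longrightarrow> m \<in> carrier M \<Longrightarrow>
    ract m (s \<oplus>\<^bsub>S\<^esub> t) = ract m s \<oplus>\<^bsub>M\<^esub> ract m t"
  and ract_mult:
  "s \<in> carrier S \<Longrightarrow> t \<in> carrier S \<Longrightarrow> m \<in> carrier M \<Longrightarrow>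
    ract m (s \<otimes>\<^bsub>S\<^esub> t) = ract (ract m s) t"
  and ract_lact_commute:
  "s \<in> carrier S \<Longrightarrow> t \<in> carrier S \<Longrightarrow> m \<in> carrier M \<Longrightarrow>
    ract (lact s m) t = lact s (ract m t)"
  and ract_smult_left:
  "r \<in> carrier R \<Longrightarrow> s \<in> carrier S \<Longrightarrow> m \<in> carrier M \<Longrightarrow>
    ract (r \<odot>\<^bsub>M\<^esub> m) s = r \<odot>\<^bsub>M\<^esub> ract m s"
  using is_bimodule by (simp_all add: bimodule_def)

lemma lact_additive: "s \<in> carrier S \<Longrightarrow> abelian_group_hom M M (lact s)"
  using is_bimodule
  by (intro additive_abelian_group_hom M.abelian_group_axioms) (auto simp: bimodule_def)

lemma ract_additive_left: "s \<in> carrier S \<Longrightarrow> abelian_group_hom M M (\<lambda>m. ract m s)"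
  by (intro additive_abelian_group_hom M.abelian_group_axioms)
    (auto simp: ract_closed ract_add_left)

lemma ract_additive_right: "m \<in> carrier M \<Longrightarrow> abelian_group_hom S M (ract m)"
  by (intro additive_abelian_group_hom M.abelian_group_axioms S.abelian_group_axioms)
    (auto simp: ract_closed ract_add_right)

lemma lact_zero: "s \<in> carrier S \<Longrightarrow> lact s \<zero>\<^bsub>M\<^esub> = \<zero>\<^bsub>M\<^esub>"
  using abelian_group_hom.hom_zero[OF lact_additive] .

lemma ract_zero_left: "s \<in> carrier S \<Longrightarrow> ract \<zero>\<^bsub>M\<^esub> s = \<zero>\<^bsub>M\<^esub>"
  using abelian_group_hom.hom_zero[OF ract_additive_left] .

lemma ract_minus_left:
  "s \<in> carrier S \<Longrightarrow> m \<in> carrier M \<Longrightarrow> ract (\<ominus>\<^bsub>M\<^esub> m) s = \<ominus>\<^bsub>M\<^esub> ract m s"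
  using abelian_group_hom.hom_a_inv[OF ract_additive_left] .

lemma ract_minus_right:
  "s \<in> carrier S \<Longrightarrow> t \<in> carrier S \<Longrightarrow> m \<in> carrier M \<Longrightarrow>
    ract m (s \<ominus>\<^bsub>S\<^esub> t) = ract m s \<ominus>\<^bsub>M\<^esub> ract m t"
  using abelian_group_hom.hom_add[OF ract_additive_right] abelian_group_hom.hom_a_inv[OF ract_additive_right]
  by (simp add: S.minus_eq M.minus_eq)

lemma Tset_iff:
  "m \<in> Tset S M ract x \<longleftrightarrow>
    m \<in> carrier M \<and> (\<forall>a\<in>carrier S. ract m (x \<otimes>\<^bsub>S\<^esub> a \<ominus>\<^bsub>S\<^esub> a \<otimes>\<^bsub>S\<^esub> x) = \<zero>\<^bsub>M\<^esub>)"
  by (simp add: Tset_def)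

lemma Tset_submodule:
  assumes "x \<in> carrier S"
  shows "submodule (Tset S M ract x) R M"
proof (rule M.submoduleI)
  show "Tset S M ract x \<subseteq> carrier M"
    by (auto simp: Tset_iff)
  show "\<zero>\<^bsub>M\<^esub> \<in> Tset S M ract x"
    using assms by (simp add: Tset_iff ract_zero_left)
  show "\<ominus>\<^bsub>M\<^esub> m \<in> Tset S M ract x" if "m \<in> Tset S M ract x" for m
    using that assms by (simp add: Tset_iff ract_minus_left)
  show "m \<oplus>\<^bsub>M\<^esub> n \<in> Tset S M ract x" if "m \<in> Tset S M ract x" "n \<in> Tset S M ract x" for m n
    using that assms by (simp add: Tset_iff ract_add_left)
  show "r \<odot>\<^bsub>M\<^esub> m \<in> Tset S M ract x" if "r \<in> carrier R" "m \<in> Tset S M ract x" for r m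
    using that assms by (simp add: Tset_iff ract_smult_left)
qed

lemma Tset_lact_closed:
  assumes "x \<in> carrier S" "s \<in> carrier S" "m \<in> Tset S M ract x"
  shows "lact s m \<in> Tset S M ract x"
  using assms by (simp add: Tset_iff lact_closed ract_lact_commute lact_zero)

lemma Tset_ract_closed:
  assumes x: "x \<in> carrier S" and s: "s \<in> carrier S" and m: "m \<in> Tset S M ract x"
  shows "ract m s \<in> Tset S M ract x"
proof -
  let ?c = "\<lambda>a. x \<otimes>\<^bsub>S\<^esub> a \<ominus>\<^bsub>S\<^esub> a \<otimes>\<^bsub>S\<^esub> x"
  have m_carrier: "m \<in> carrier M" and m_annihilates: "\<And>a. a \<in> carrier S \<Longrightarrow> ract m (?c a) = \<zero>\<^bsub>M\<^esub>"
    using m by (auto simp: Tset_iff)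
  have "ract (ract m s) (?c a) = \<zero>\<^bsub>M\<^esub>" if a: "a \<in> carrier S" for a
  proof -
    have "ract (ract m s) (?c a) = ract m (s \<otimes>\<^bsub>S\<^esub> ?c a)"
      using x s a m_carrier by (simp add: ract_mult)
    also have "\<dots> = ract m (?c (s \<otimes>\<^bsub>S\<^esub> a)) \<ominus>\<^bsub>M\<^esub> ract (ract m (?c s)) a"
      using x s a m_carrier by (simp add: S.l_mult_commutator ract_minus_right ract_mult)
    also have "\<dots> = \<zero>\<^bsub>M\<^esub>"
      using s a by (simp add: m_annihilates ract_zero_left M.minus_eq)
    finally show ?thesis .
  qed
  then show ?thesis
    using s m_carrier by (simp add: Tset_iff ract_closed)
qed

end

theorem lemma3p16:
  fixes R :: "('r, 'x) ring_scheme" and S :: "('r, 's) module" and M :: "('r, 'm) module"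
    and lact :: "'s \<Rightarrow> 'm \<Rightarrow> 'm" and ract :: "'m \<Rightarrow> 's \<Rightarrow> 'm"
  assumes "cring R"
    and "r_algebra R S"
    and "bimodule R S M lact ract"
    and "x \<in> carrier S"
  shows "subbimodule (Tset S M ract x) R S M lact ract"
proof -
  interpret ring_bimodule R S M lact ract
    using assms(2,3) by (simp add: ring_bimodule_def r_algebra_def)
  show ?thesis
    using assms(4)
    by (simp add: subbimodule_def Tset_submodule Tset_lact_closed Tset_ract_closed)
qed

end
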